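(* Let $2\le k\le mn$, fix $p_x\in\mathcal{P}_k$, let $\Omega$ be a convex subset of $M_{m\times n}(\mathbb{C})$, and let $\Omega_d$ be the set of matrices in $\Omega$ having distinct zeros with respect to $p_x$. Then $\Omega_d$ is dense in $\Omega$ if and only if $\Omega_d$ is nonempty.
   Context: $M_{m\times n}(\mathbb{C})$ is the set of $m\times n$ complex matrices with the topology induced by the Frobenius norm. Let $\mathbb{C}_k[x]$ be the set of complex polynomials of degree $k$ and $\mathbb{C}^k_{\mathrm{sym}}$ the set of unordered $k$-tuples of complex numbers; $r_k:\mathbb{C}_k[x]\to\mathbb{C}^k_{\mathrm{sym}}$ sends a polynomial to the unordered $k$-tuple of its roots (with multiplicity). $\mathcal{P}_k$ is the set of maps $p_x:M_{m\times n}(\mathbb{C})\to\mathbb{C}_k[x]$ of the form $p_x(A)=x^k+\sum_{i=1}^{k}q_i(A)x^{i-1}$, where each $q_i(A)$ is a polynomial function of the entries of $A$, such that $r_k(p_x(M_{m\times n}(\mathbb{C})))=\mathbb{C}^k_{\mathrm{sym}}$. $A$ has distinct zeros with respect to $p_x$ if the polynomial $p_x(A)$ (in $x$) has $k$ pairwise distinct roots. *)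

theory Defs
  imports "HOL-Analysis.Analysis" "HOL-Computational_Algebra.Polynomial"
begin

text \<open>Complex m x n matrices: complex^'n^'m. The norm on this type is the
  Euclidean (l2) norm of all entries, i.e. the Frobenius norm.\<close>

inductive_set matrix_poly_fun :: "(complex^'n^'m \<Rightarrow> complex) set" where
  const: "(\<lambda>A. c) \<in> matrix_poly_fun"
| entry: "(\<lambda>A. A $ i $ j) \<in> matrix_poly_fun"
| add: "f \<in> matrix_poly_fun \<Longrightarrow> g \<in> matrix_poly_fun \<Longrightarrow> (\<lambda>A. f A + g A) \<in> matrix_poly_fun"
| mult: "f \<in> matrix_poly_fun \<Longrightarrow> g \<in> matrix_poly_fun \<Longrightarrow> (\<lambda>A. f A * g A) \<in> matrix_poly_fun"

definition px :: "nat \<Rightarrow> (nat \<Rightarrow> complex^'n^'m \<Rightarrow> complex) \<Rightarrow> complex^'n^'m \<Rightarrow> complex poly" where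
  "px k q A = monom 1 k + (\<Sum>i=1..k. monom (q i A) (i - 1))"

definition in_P :: "nat \<Rightarrow> (nat \<Rightarrow> complex^'n^'m \<Rightarrow> complex) \<Rightarrow> bool" where
  "in_P k q \<longleftrightarrow> (\<forall>i\<in>{1..k}. q i \<in> matrix_poly_fun) \<and>
     (\<forall>R :: complex multiset. size R = k \<longrightarrow> (\<exists>A. proots (px k q A) = R))"

definition distinct_zeros :: "nat \<Rightarrow> (nat \<Rightarrow> complex^'n^'m \<Rightarrow> complex) \<Rightarrow> complex^'n^'m \<Rightarrow> bool" where
  "distinct_zeros k q A \<longleftrightarrow> card {x. poly (px k q A) x = 0} = k"

end

theory Submission
  imports Defs Subresultants.Subresultant_Gcd "HOL-Computational_Algebra.Fundamental_Theorem_Algebra"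
    "HOL-Computational_Algebra.Field_as_Ring"
begin

text \<open>Along the segment from B to a matrix A0 with distinct zeros, the resultant of p_x and
  its derivative is a polynomial in the real parameter t that does not vanish at t = 1
  (where the segment reaches A0). It therefore has only finitely many real zeros, so all but
  finitely many points of the segment have distinct zeros, and these points, which lie in the
  convex set \<Omega>, accumulate at B.\<close>

lemma card_set_mset_eq_size_iff:
  "card (set_mset M) = size M \<longleftrightarrow> (\<forall>x. count M x \<le> 1)"
proof -
  let ?M' = "mset_set (set_mset M)"
  have sub: "?M' \<subseteq># M"
    by (rule mset_set_set_mset_msubset)
  have size_M': "size ?M' = card (set_mset M)" by simp
  show ?thesis
  proof
    assume "card (set_mset M) = size M"
    then have "?M' = M" using sub size_M'
      by (metis mset_subset_size subset_mset.not_eq_order_implies_strict nat_less_le)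
    then show "\<forall>x. count M x \<le> 1"
      by (metis count_mset_set' le_numeral_extra(4) zero_le)
  next
    assume "\<forall>x. count M x \<le> 1"
    then have "?M' = M"
      by (intro multiset_eqI) (auto simp add: count_mset_set' le_antisym Suc_leI count_eq_zero_iff)
    then show "card (set_mset M) = size M" using size_M' by simp
  qed
qed

lemma card_roots_eq_degree_iff_rsquarefree:
  fixes p :: "complex poly"
  assumes "p \<noteq> 0"
  shows "card {x. poly p x = 0} = degree p \<longleftrightarrow> rsquarefree p"
proof -
  have "card {x. poly p x = 0} = degree p \<longleftrightarrow> card (set_mset (proots p)) = size (proots p)"
    using assms by (simp add: set_count_proots size_proots_complex)
  also have "\<dots> \<longleftrightarrow> (\<forall>x. order x p \<le> 1)"
    unfolding card_set_mset_eq_size_iff count_proots[OF assms] by (rule refl)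
  also have "\<dots> \<longleftrightarrow> rsquarefree p"
    using assms unfolding rsquarefree_def by (metis le_Suc_eq le_zero_eq One_nat_def)
  finally show ?thesis .
qed

lemma resultant_pderiv_neq_0_iff_rsquarefree:
  fixes p :: "complex poly"
  assumes "p \<noteq> 0"
  shows "resultant p (pderiv p) \<noteq> 0 \<longleftrightarrow> rsquarefree p"
proof -
  let ?g = "gcd p (pderiv p)"
  have "?g \<noteq> 0" using assms by simp
  have roots_gcd: "poly ?g z = 0 \<longleftrightarrow> poly p z = 0 \<and> poly (pderiv p) z = 0" for z
    by (simp only: poly_eq_0_iff_dvd gcd_greatest_iff)
  have "degree ?g = 0 \<longleftrightarrow> (\<forall>z. poly ?g z \<noteq> 0)"
  proof
    assume "degree ?g = 0"
    then obtain c where "?g = [:c:]" by (metis degree_eq_zeroE)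
    with \<open>?g \<noteq> 0\<close> show "\<forall>z. poly ?g z \<noteq> 0" by auto
  next
    assume "\<forall>z. poly ?g z \<noteq> 0"
    then have "set_mset (proots ?g) = {}"
      unfolding set_count_proots[OF \<open>?g \<noteq> 0\<close>] by blast
    then have "proots ?g = {#}" by simp
    then show "degree ?g = 0" using size_proots_complex[of ?g] by simp
  qed
  moreover have "resultant p (pderiv p) \<noteq> 0 \<longleftrightarrow> degree ?g = 0"
    using resultant_0_gcd[of p "pderiv p"] by blast
  ultimately show ?thesis
    unfolding rsquarefree_roots[of p] by (simp add: roots_gcd)
qed

lemma resultant_pderiv_map_poly_eval:
  fixes Q :: "'a::{idom,ring_char_0} poly poly"
  assumes "degree (map_poly (\<lambda>p. poly p t) Q) = degree Q"
  shows "resultant (map_poly (\<lambda>p. poly p t) Q) (pderiv (map_poly (\<lambda>p. poly p t) Q))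
           = poly (resultant Q (pderiv Q)) t"
  unfolding poly_hom.map_poly_pderiv[symmetric]
  by (rule poly_hom.resultant_map_poly) (simp_all add: assms poly_hom.map_poly_pderiv degree_pderiv)

lemma degree_monom_one_plus_lower:
  fixes c :: "nat \<Rightarrow> 'a::comm_ring_1"
  assumes "k \<ge> 1"
  shows "degree (monom 1 k + (\<Sum>i=1..k. monom (c i) (i - 1))) = k"
proof -
  have "degree (\<Sum>i=1..k. monom (c i) (i - 1)) \<le> k - 1"
    by (rule degree_sum_le) (auto intro: order.trans[OF degree_monom_le])
  also have "\<dots> < degree (monom (1::'a) k)"
    using assms by (simp add: degree_monom_eq)
  finally show ?thesis
    by (simp add: degree_add_eq_left degree_monom_eq)
qed

lemma degree_px: "k \<ge> 1 \<Longrightarrow> degree (px k q A) = k"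
  unfolding px_def by (rule degree_monom_one_plus_lower)

lemma distinct_zeros_iff_resultant_pderiv:
  assumes "k \<ge> 1"
  shows "distinct_zeros k q A \<longleftrightarrow> resultant (px k q A) (pderiv (px k q A)) \<noteq> 0"
proof -
  have "px k q A \<noteq> 0"
    using degree_px[OF assms, of q A] assms by auto
  then show ?thesis
    using card_roots_eq_degree_iff_rsquarefree[of "px k q A"]
      resultant_pderiv_neq_0_iff_rsquarefree[of "px k q A"]
    by (simp add: distinct_zeros_def degree_px[OF assms])
qed

lemma matrix_poly_fun_on_segment:
  fixes A B :: "complex^'n^'m"
  assumes "f \<in> matrix_poly_fun"
  shows "\<exists>r. \<forall>t::real. f ((1 - t) *\<^sub>R B + t *\<^sub>R A) = poly r (of_real t)"
  using assms
proof (induction rule: matrix_poly_fun.induct)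
  case (const c)
  show ?case by (intro exI[of _ "[:c:]"]) simp
next
  case (entry i j)
  show ?case
  proof (intro exI[of _ "[:B $ i $ j, A $ i $ j - B $ i $ j:]"] allI)
    fix t :: real
    have "((1 - t) *\<^sub>R B + t *\<^sub>R A) $ i $ j = (1 - t) *\<^sub>R B $ i $ j + t *\<^sub>R A $ i $ j"
      by (simp only: vector_add_component vector_scaleR_component)
    then show "((1 - t) *\<^sub>R B + t *\<^sub>R A) $ i $ j = poly [:B $ i $ j, A $ i $ j - B $ i $ j:] (of_real t)"
      by (simp add: scaleR_conv_of_real algebra_simps)
  qed
next
  case (add f g)
  then obtain r s where "\<forall>t::real. f ((1 - t) *\<^sub>R B + t *\<^sub>R A) = poly r (of_real t)"
    and "\<forall>t::real. g ((1 - t) *\<^sub>R B + t *\<^sub>R A) = poly s (of_real t)" by blast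
  then show ?case by (intro exI[of _ "r + s"]) simp
next
  case (mult f g)
  then obtain r s where "\<forall>t::real. f ((1 - t) *\<^sub>R B + t *\<^sub>R A) = poly r (of_real t)"
    and "\<forall>t::real. g ((1 - t) *\<^sub>R B + t *\<^sub>R A) = poly s (of_real t)" by blast
  then show ?case by (intro exI[of _ "r * s"]) simp
qed

lemma distinct_zeros_on_segment_iff_poly:
  fixes A B :: "complex^'n^'m"
  assumes "k \<ge> 1" and "\<forall>i\<in>{1..k}. q i \<in> matrix_poly_fun"
  obtains D :: "complex poly"
  where "\<And>t. distinct_zeros k q ((1 - t) *\<^sub>R B + t *\<^sub>R A) \<longleftrightarrow> poly D (of_real t) \<noteq> 0"
proof -
  let ?eval = "\<lambda>t::real. map_poly (\<lambda>p. poly p (of_real t))"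
  have "\<forall>i\<in>{1..k}. \<exists>r. \<forall>t::real. q i ((1 - t) *\<^sub>R B + t *\<^sub>R A) = poly r (of_real t)"
    using matrix_poly_fun_on_segment assms(2) by blast
  then obtain R
    where R: "\<And>i t. i \<in> {1..k} \<Longrightarrow> q i ((1 - t) *\<^sub>R B + t *\<^sub>R A) = poly (R i) (of_real t)"
    by metis
  define Q :: "complex poly poly" where "Q = monom 1 k + (\<Sum>i=1..k. monom (R i) (i - 1))"
  have "?eval t (sum f I) = (\<Sum>i\<in>I. ?eval t (f i))" for t and f :: "nat \<Rightarrow> complex poly poly" and I
    by (induction I rule: infinite_finite_induct) (simp_all add: map_poly_add)
  then have eval_Q: "?eval t Q = px k q ((1 - t) *\<^sub>R B + t *\<^sub>R A)" for t
    unfolding Q_def px_def by (simp add: hom_distribs R)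
  have "degree Q = k"
    unfolding Q_def using assms(1) by (rule degree_monom_one_plus_lower)
  then have "degree (?eval t Q) = degree Q" for t
    by (simp add: eval_Q degree_px[OF assms(1)])
  then show ?thesis
    by (intro that[of "resultant Q (pderiv Q)"])
       (simp add: distinct_zeros_iff_resultant_pderiv[OF assms(1)] resultant_pderiv_map_poly_eval
          flip: eval_Q)
qed

lemma segment_start_in_closure_cofinite:
  fixes A B :: "'a::real_normed_vector"
  assumes "finite F"
  shows "B \<in> closure ((\<lambda>t. (1 - t) *\<^sub>R B + t *\<^sub>R A) ` ({0<..<1} - F))"
    (is "_ \<in> closure (?seg ` _)")
proof -
  have "0 islimpt (F \<union> ({0<..<1} - F))"
    by (rule islimpt_subset[OF islimpt_greaterThanLessThan1]) auto
  then have "0 islimpt ({0<..<1} - F)"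
    by (simp only: islimpt_Un_finite[OF assms])
  then have "0 \<in> closure ({0<..<1} - F)"
    by (simp add: closure_def)
  moreover have "?seg ` closure ({0<..<1} - F) \<subseteq> closure (?seg ` ({0<..<1} - F))"
    by (rule image_closure_subset) (auto intro!: continuous_intros closure_subset)
  ultimately have "?seg 0 \<in> closure (?seg ` ({0<..<1} - F))"
    by blast
  then show ?thesis
    by simp
qed

lemma convex_subset_closure_distinct_zeros:
  assumes "k \<ge> 1" and "\<forall>i\<in>{1..k}. q i \<in> matrix_poly_fun"
    and "convex \<Omega>" and "A0 \<in> \<Omega>" and "distinct_zeros k q A0"
  shows "\<Omega> \<subseteq> closure {A \<in> \<Omega>. distinct_zeros k q A}"
proof
  fix B assume "B \<in> \<Omega>"
  let ?seg = "\<lambda>t. (1 - t) *\<^sub>R B + t *\<^sub>R A0"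
  obtain D :: "complex poly" where D: "\<And>t. distinct_zeros k q (?seg t) \<longleftrightarrow> poly D (of_real t) \<noteq> 0"
    using distinct_zeros_on_segment_iff_poly[OF assms(1,2)] by metis
  let ?bad = "{t::real. poly D (of_real t) = 0}"
  have "D \<noteq> 0"
    using D[of 1] \<open>distinct_zeros k q A0\<close> by auto
  then have "finite (of_real -` {z. poly D z = 0} :: real set)"
    by (intro finite_vimageI poly_roots_finite inj_of_real)
  then have "B \<in> closure (?seg ` ({0<..<1} - ?bad))"
    by (intro segment_start_in_closure_cofinite) (simp add: vimage_def)
  moreover have "?seg t \<in> {A \<in> \<Omega>. distinct_zeros k q A}" if "t \<in> {0<..<1} - ?bad" for t
    using that convexD[OF \<open>convex \<Omega>\<close> \<open>B \<in> \<Omega>\<close> \<open>A0 \<in> \<Omega>\<close>, of "1 - t" t] D[of t] by simp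
  then have "closure (?seg ` ({0<..<1} - ?bad)) \<subseteq> closure {A \<in> \<Omega>. distinct_zeros k q A}"
    by (intro closure_mono image_subsetI)
  ultimately show "B \<in> closure {A \<in> \<Omega>. distinct_zeros k q A}"
    by (rule subsetD[rotated])
qed

theorem theorem5p5:
  fixes k :: nat and q :: "nat \<Rightarrow> complex^'n^'m \<Rightarrow> complex"
    and \<Omega> :: "(complex^'n^'m) set"
  assumes "2 \<le> k" and "k \<le> CARD('m) * CARD('n)"
    and "in_P k q"
    and "convex \<Omega>" and "\<Omega> \<noteq> {}"
  shows "\<Omega> \<subseteq> closure {A \<in> \<Omega>. distinct_zeros k q A} \<longleftrightarrow>
         {A \<in> \<Omega>. distinct_zeros k q A} \<noteq> {}"
proof
  assume "\<Omega> \<subseteq> closure {A \<in> \<Omega>. distinct_zeros k q A}"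
  with \<open>\<Omega> \<noteq> {}\<close> show "{A \<in> \<Omega>. distinct_zeros k q A} \<noteq> {}"
    by (metis closure_empty subset_empty)
next
  assume "{A \<in> \<Omega>. distinct_zeros k q A} \<noteq> {}"
  then obtain A0 where "A0 \<in> \<Omega>" and "distinct_zeros k q A0" by auto
  moreover have "k \<ge> 1" and "\<forall>i\<in>{1..k}. q i \<in> matrix_poly_fun"
    using assms(1,3) unfolding in_P_def by auto
  ultimately show "\<Omega> \<subseteq> closure {A \<in> \<Omega>. distinct_zeros k q A}"
    using convex_subset_closure_distinct_zeros \<open>convex \<Omega>\<close> by blast
qed

end
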